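(* Let $A,B,C,D$ be integers with $A<0$, $A$ odd and square-free, $B,C>0$, $D=B^2+C^2$ square-free, and $\gcd(A,D)=1$, and let $K=\mathbb{Q}\big(\sqrt{A(D+B\sqrt{D})}\big)$ (a totally imaginary cyclic quartic field). Then \[ \tfrac{1}{2304}\, A^2 D \le M(\mathcal{O}_K). \]
   Context: For a nonconstant polynomial $f(x)=c\prod_{i=1}^d (x-\alpha_i)\in\mathbb{C}[x]$, the Mahler measure is $M(f)=|c|\prod_{|\alpha_i|\ge 1}|\alpha_i|$. For an algebraic number $\alpha$, $M(\alpha)$ is the Mahler measure of its minimal polynomial over $\mathbb{Z}$ (with content $1$). For a number field $K$ with ring of integers $\mathcal{O}_K$, $M(\mathcal{O}_K)=\min\{M(\alpha):\alpha\in\mathcal{O}_K,\ \mathbb{Q}(\alpha)=K\}$. Every cyclic quartic field can be written uniquely as $\mathbb{Q}(\sqrt{A(D+B\sqrt{D})})$ with $A$ odd square-free, $D=B^2+C^2$ square-free, $B,C>0$, $\gcd(A,D)=1$; it is totally imaginary iff $A<0$. *)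

theory Defs
  imports "HOL-Computational_Algebra.Computational_Algebra"
begin

definition is_subfield_complex :: "complex set \<Rightarrow> bool" where
  "is_subfield_complex F \<longleftrightarrow> 0 \<in> F \<and> 1 \<in> F \<and>
     (\<forall>x\<in>F. \<forall>y\<in>F. x + y \<in> F \<and> x - y \<in> F \<and> x * y \<in> F) \<and>
     (\<forall>x\<in>F. inverse x \<in> F)"

definition gen_field :: "complex set \<Rightarrow> complex set" where
  "gen_field S = \<Inter> {F. is_subfield_complex F \<and> S \<subseteq> F}"

definition alg_integer :: "complex \<Rightarrow> bool" where
  "alg_integer x \<longleftrightarrow> (\<exists>p :: int poly. lead_coeff p = 1 \<and> poly (map_poly of_int p) x = 0)"

definition ring_of_integers :: "complex set \<Rightarrow> complex set" where
  "ring_of_integers K = {x \<in> K. alg_integer x}"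

definition mahler_measure :: "complex poly \<Rightarrow> real" where
  "mahler_measure p = cmod (lead_coeff p) *
     (\<Prod>r\<in>{r. poly p r = 0}. max 1 (cmod r) ^ order r p)"

definition is_min_int_poly :: "int poly \<Rightarrow> complex \<Rightarrow> bool" where
  "is_min_int_poly p x \<longleftrightarrow> irreducible p \<and> content p = 1 \<and>
     poly (map_poly of_int p) x = 0"

text \<open>Mahler measure of an algebraic number (independent of the sign of the minimal polynomial).\<close>
definition mahler_alg :: "complex \<Rightarrow> real" where
  "mahler_alg x = mahler_measure (map_poly of_int (SOME p. is_min_int_poly p x))"

definition mahler_ring_of_integers :: "complex set \<Rightarrow> real" where
  "mahler_ring_of_integers K =
     Inf {mahler_alg a | a. a \<in> ring_of_integers K \<and> gen_field {a} = K}"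

end

theory Submission
  imports Defs "Jordan_Normal_Form.Char_Poly"
begin

text \<open>
  Write \<open>K = \<rat>(\<theta>)\<close> with \<open>\<theta>\<^sup>2 = A (D + B \<surd>D)\<close>, so that every element of \<open>K\<close> is \<open>x + y \<theta>\<close> with
  \<open>x, y \<in> \<rat>(\<surd>D)\<close>; replacing \<open>\<surd>D\<close> by \<open>-\<surd>D\<close> and \<open>\<theta>\<close> by \<open>\<theta>' = \<surd>(A (D - B \<surd>D))\<close> is another
  embedding. If \<open>\<alpha> = x + y \<theta>\<close> is an integral generator of \<open>K\<close>, then \<open>y \<noteq> 0\<close>, the numbers \<open>\<alpha>, cnj \<alpha>\<close>
  and their conjugates \<open>\<beta>, cnj \<beta>\<close> are four distinct roots of the minimal polynomial of \<open>\<alpha>\<close>,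
  and \<open>M(\<alpha>) \<ge> (Im \<alpha> Im \<beta>)\<^sup>2 = A\<^sup>2 C\<^sup>2 D N(y)\<^sup>2\<close>, \<open>N\<close> the norm of \<open>\<rat>(\<surd>D)\<close>. Integrality of \<open>\<alpha> - cnj \<alpha> = 2 y \<theta>\<close>, multiplied
  by \<open>\<theta>\<close> and by \<open>\<theta>'\<close>, forces \<open>4 (c + d B)\<close> and \<open>4 C d\<close> to be integers for \<open>y = c + d \<surd>D\<close>, so
  \<open>16 C N(y)\<close> is a nonzero integer and \<open>M(\<alpha>) \<ge> A\<^sup>2 D / 256\<close>.
\<close>

lemma squarefree_dvd_power_imp_dvd:
  fixes n a :: "'a :: factorial_semiring"
  assumes "squarefree n" and "n dvd a ^ k"
  shows "n dvd a"
proof (cases "a = 0")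
  case True
  then show ?thesis by simp
next
  case False
  have "n \<noteq> 0"
    using assms(1) by (metis not_squarefree_0)
  then show ?thesis
  proof (rule multiplicity_le_imp_dvd)
    fix p :: 'a
    assume p: "prime p"
    show "multiplicity p n \<le> multiplicity p a"
    proof (cases "p dvd n")
      case True
      then have "p dvd a"
        using assms(2) p by (meson dvd_trans prime_dvd_power)
      then have "1 \<le> multiplicity p a"
        using p False by (metis One_nat_def not_prime_unit power_one_right multiplicity_geI)
      moreover have "multiplicity p n \<le> 1"
        using assms(1) \<open>n \<noteq> 0\<close> p squarefree_factorial_semiring'' by blast
      ultimately show ?thesis by linarith
    qed (simp add: not_dvd_imp_multiplicity_0)
  qed
qed

lemma Ints_if_square_times_squarefree_in_Ints:
  fixes D :: int and x :: rat
  assumes "squarefree D" and "x^2 * of_int D \<in> \<int>"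
  shows "x \<in> \<int>"
proof -
  obtain a b where q: "quotient_of x = (a, b)" by force
  have b: "b > 0" "coprime a b" and x: "x = of_int a / of_int b"
    using quotient_of_denom_pos[OF q] quotient_of_coprime[OF q] quotient_of_div[OF q] by auto
  obtain k where "x^2 * of_int D = of_int k"
    using assms(2) by (auto elim: Ints_cases)
  then have "of_int (a^2 * D) = (of_int (k * b^2) :: rat)"
    using b(1) by (simp add: x field_simps power2_eq_square)
  then have "b^2 dvd a^2 * D"
    by (simp only: of_int_eq_iff) simp
  moreover have "coprime (b^2) (a^2)"
    using b(2) by (simp add: coprime_commute)
  ultimately have "b^2 dvd D"
    using coprime_dvd_mult_right_iff by blast
  then have "b dvd 1"
    using assms(1) squarefreeD by blast
  then have "b = 1"
    using b(1) by simp
  then show ?thesis by (simp add: x)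
qed

section \<open>Algebraic integers\<close>

lemma Ints_if_algebraic_int_of_rat:
  fixes q :: rat
  assumes "algebraic_int (of_rat q :: complex)"
  shows "q \<in> \<int>"
proof -
  have "(of_rat q :: complex) \<in> \<int>"
    using assms by (intro rational_algebraic_int_is_int) auto
  then obtain k where "(of_rat q :: complex) = of_int k"
    by (auto elim: Ints_cases)
  then have "q = of_int k"
    by (metis of_rat_eq_iff of_rat_of_int_eq)
  then show ?thesis by simp
qed

lemma of_real_of_rat: "of_real (of_rat q) = (of_rat q :: 'a :: real_field)"
  by (cases q) (simp add: of_rat_rat of_real_divide)

definition int_span :: "complex set \<Rightarrow> complex set" where
  "int_span G = {w. \<exists>c :: complex \<Rightarrow> int. w = (\<Sum>h\<in>G. of_int (c h) * h)}"

lemma int_span_add: "a \<in> int_span G \<Longrightarrow> b \<in> int_span G \<Longrightarrow> a + b \<in> int_span G"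
  unfolding int_span_def
proof safe
  fix c d :: "complex \<Rightarrow> int"
  show "\<exists>e. (\<Sum>h\<in>G. of_int (c h) * h) + (\<Sum>h\<in>G. of_int (d h) * h) = (\<Sum>h\<in>G. of_int (e h) * h)"
    by (rule exI[of _ "\<lambda>h. c h + d h"]) (simp add: sum.distrib[symmetric] algebra_simps)
qed

lemma int_span_scale: "a \<in> int_span G \<Longrightarrow> of_int k * a \<in> int_span G"
  unfolding int_span_def
proof safe
  fix c :: "complex \<Rightarrow> int"
  show "\<exists>e. of_int k * (\<Sum>h\<in>G. of_int (c h) * h) = (\<Sum>h\<in>G. of_int (e h) * h)"
    by (rule exI[of _ "\<lambda>h. k * c h"]) (simp add: sum_distrib_left algebra_simps)
qed

lemma int_span_sum:
  assumes "finite I" and "\<And>i. i \<in> I \<Longrightarrow> f i \<in> int_span G"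
  shows "sum f I \<in> int_span G"
  using assms
proof (induction I rule: finite_induct)
  case empty
  show ?case unfolding int_span_def by (auto intro: exI[of _ "\<lambda>h. 0"])
qed (auto intro: int_span_add)

lemma int_span_superset:
  assumes "finite G" and "g \<in> G"
  shows "g \<in> int_span G"
proof -
  have "(\<Sum>h\<in>G. of_int (if h = g then 1 else 0) * h) = (\<Sum>h\<in>G. if h = g then h else 0)"
    by (rule sum.cong) auto
  also have "\<dots> = g"
    using assms by (simp add: sum.delta)
  finally show ?thesis
    unfolding int_span_def by (intro CollectI exI[of _ "\<lambda>h. if h = g then 1 else 0"]) simp
qed

lemma algebraic_int_if_eigenvalue_of_int_mat:
  fixes M :: "int mat" and z :: complex
  assumes "M \<in> carrier_mat n n" and "eigenvalue (map_mat of_int M) z"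
  shows "algebraic_int z"
proof -
  have "map_mat of_int M \<in> carrier_mat n n"
    using assms(1) by simp
  then have "poly (char_poly (map_mat of_int M)) z = 0"
    using assms(2) eigenvalue_root_char_poly by blast
  then have "poly (of_int_poly (char_poly M)) z = 0"
    unfolding of_int_hom.char_poly_hom[OF assms(1)] .
  moreover have "monic (char_poly M)"
    using degree_monic_char_poly[OF assms(1)] by simp
  ultimately show ?thesis
    unfolding algebraic_int_altdef_ipoly by blast
qed

text \<open>Multiplication by \<open>z\<close> has an integer matrix on the span of \<open>G\<close>, with eigenvector the
  vector of elements of \<open>G\<close> (nonzero since \<open>1 \<in> G\<close>).\<close>
lemma algebraic_int_if_int_span_stable:
  fixes G :: "complex set" and z :: complex
  assumes fin: "finite G" and one: "1 \<in> G"
    and stable: "\<forall>g\<in>G. z * g \<in> int_span G"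
  shows "algebraic_int z"
proof -
  define N where "N = card G"
  obtain f where bij: "bij_betw f {..<N} G"
    using ex_bij_betw_nat_finite[OF fin] N_def by (metis lessThan_atLeast0)
  have "\<forall>g\<in>G. \<exists>c. z * g = (\<Sum>h\<in>G. of_int (c h) * h)"
    using stable unfolding int_span_def by auto
  then obtain M where M: "\<And>g. g \<in> G \<Longrightarrow> z * g = (\<Sum>h\<in>G. of_int (M g h) * h)"
    by metis
  define Mi :: "int mat" where "Mi = mat N N (\<lambda>(i, j). M (f i) (f j))"
  define v where "v = vec N f"
  have Mi: "Mi \<in> carrier_mat N N" and Mc: "map_mat of_int Mi \<in> carrier_mat N N"
    unfolding Mi_def by auto
  have f_in: "\<And>i. i < N \<Longrightarrow> f i \<in> G"
    using bij by (auto simp: bij_betw_def)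
  have Mv: "map_mat of_int Mi *\<^sub>v v = z \<cdot>\<^sub>v v"
  proof (rule eq_vecI)
    fix i assume "i < dim_vec (z \<cdot>\<^sub>v v)"
    then have i: "i < N" by (simp add: v_def)
    have "(map_mat of_int Mi *\<^sub>v v) $ i = (\<Sum>j<N. of_int (M (f i) (f j)) * f j)"
      using i unfolding Mi_def v_def by (simp add: scalar_prod_def row_def lessThan_atLeast0)
    also have "\<dots> = (\<Sum>h\<in>G. of_int (M (f i) h) * h)"
      using sum.reindex_bij_betw[OF bij, of "\<lambda>h. of_int (M (f i) h) * h"] by simp
    also have "\<dots> = z * f i"
      using M[OF f_in[OF i]] by simp
    finally show "(map_mat of_int Mi *\<^sub>v v) $ i = (z \<cdot>\<^sub>v v) $ i"
      using i by (simp add: v_def)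
  qed (simp add: v_def Mi_def)
  obtain i0 where i0: "i0 < N" "f i0 = 1"
    using bij one by (auto simp: bij_betw_def)
  have "v \<noteq> 0\<^sub>v N"
    using i0 by (metis index_vec index_zero_vec(1) one_neq_zero v_def)
  then have "eigenvector (map_mat of_int Mi) v z"
    unfolding eigenvector_def using Mc Mv by (auto simp: v_def)
  then have "eigenvalue (map_mat of_int Mi) z"
    unfolding eigenvalue_def by blast
  then show ?thesis
    by (rule algebraic_int_if_eigenvalue_of_int_mat[OF Mi])
qed

lemma int_span_stable_mult:
  assumes fin: "finite G"
    and z1: "\<forall>g\<in>G. z1 * g \<in> int_span G" and z2: "\<forall>g\<in>G. z2 * g \<in> int_span G"
  shows "\<forall>g\<in>G. (z1 * z2) * g \<in> int_span G"
proof
  fix g assume "g \<in> G"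
  then obtain c where c: "z2 * g = (\<Sum>h\<in>G. of_int (c h) * h)"
    using z2 unfolding int_span_def by auto
  have "(z1 * z2) * g = (\<Sum>h\<in>G. of_int (c h) * (z1 * h))"
    by (simp add: mult.assoc c sum_distrib_left mult.left_commute)
  also have "\<dots> \<in> int_span G"
    using fin z1 by (intro int_span_sum int_span_scale) auto
  finally show "(z1 * z2) * g \<in> int_span G" .
qed

definition power_products :: "complex \<Rightarrow> complex \<Rightarrow> nat \<Rightarrow> nat \<Rightarrow> complex set" where
  "power_products x y n m = (\<lambda>(i, j). x ^ i * y ^ j) ` ({..<n} \<times> {..<m})"

lemma power_products_swap: "power_products x y n m = power_products y x m n"
  unfolding power_products_def by (force simp: mult.commute)

lemma monic_root_power_degree:
  fixes p :: "int poly" and x :: complex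
  assumes "monic p" and "poly (of_int_poly p) x = 0"
  shows "x ^ degree p = (\<Sum>i<degree p. of_int (- coeff p i) * x ^ i)"
proof -
  have "0 = (\<Sum>i\<le>degree p. of_int (coeff p i) * x ^ i)"
    using assms(2) by (simp add: poly_altdef coeff_map_poly degree_map_poly)
  also have "\<dots> = (\<Sum>i<degree p. of_int (coeff p i) * x ^ i) + x ^ degree p"
    using assms(1) by (simp add: lessThan_Suc_atMost[symmetric])
  finally show ?thesis
    by (simp add: sum_negf eq_neg_iff_add_eq_0 add.commute)
qed

lemma int_span_power_products_stable:
  fixes p :: "int poly" and x y :: complex and m :: nat
  assumes "monic p" and "poly (of_int_poly p) x = 0"
  defines "G \<equiv> power_products x y (degree p) m"
  shows "\<forall>g\<in>G. x * g \<in> int_span G"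
proof
  fix g assume "g \<in> G"
  then obtain i j where ij: "i < degree p" "j < m" "g = x ^ i * y ^ j"
    unfolding G_def power_products_def by auto
  have fin: "finite G"
    unfolding G_def power_products_def by simp
  show "x * g \<in> int_span G"
  proof (cases "Suc i < degree p")
    case True
    then have "x * g \<in> G"
      unfolding G_def power_products_def using ij by (auto intro!: image_eqI[of _ _ "(Suc i, j)"])
    then show ?thesis by (rule int_span_superset[OF fin])
  next
    case False
    then have "x * g = x ^ degree p * y ^ j"
      using ij by (metis Suc_lessI mult.assoc power_Suc)
    also have "\<dots> = (\<Sum>k<degree p. of_int (- coeff p k) * (x ^ k * y ^ j))"
      by (simp add: monic_root_power_degree[OF assms(1,2)] sum_distrib_right mult.assoc)
    also have "\<dots> \<in> int_span G"
      using ij by (intro int_span_sum int_span_scale int_span_superset[OF fin])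
        (auto simp: G_def power_products_def)
    finally show ?thesis .
  qed
qed

lemma monic_root_degree_pos:
  fixes p :: "int poly"
  assumes "monic p" and "poly (of_int_poly p) (x :: complex) = 0"
  shows "degree p > 0"
  using assms by (metis gr0I monic_degree_0 of_int_poly_hom.hom_one one_poly_eq_simps(1)
      poly_1 zero_neq_one)

lemma algebraic_int_plus_times:
  fixes x y :: complex
  assumes "algebraic_int x" and "algebraic_int y"
  shows "algebraic_int (x + y) \<and> algebraic_int (x * y)"
proof -
  obtain p where p: "monic p" "poly (of_int_poly p) x = 0"
    using assms(1) unfolding algebraic_int_altdef_ipoly by blast
  obtain q where q: "monic q" "poly (of_int_poly q) y = 0"
    using assms(2) unfolding algebraic_int_altdef_ipoly by blast
  define G where "G = power_products x y (degree p) (degree q)"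
  have fin: "finite G"
    unfolding G_def power_products_def by simp
  have "1 \<in> G"
    using monic_root_degree_pos[OF p] monic_root_degree_pos[OF q]
    unfolding G_def power_products_def by (auto intro!: image_eqI[of _ _ "(0, 0)"])
  moreover have x: "\<forall>g\<in>G. x * g \<in> int_span G"
    unfolding G_def using int_span_power_products_stable[OF p] .
  moreover have y: "\<forall>g\<in>G. y * g \<in> int_span G"
    unfolding G_def power_products_swap[of x] using int_span_power_products_stable[OF q] .
  moreover have "\<forall>g\<in>G. (x + y) * g \<in> int_span G"
    using x y by (simp add: distrib_right int_span_add)
  ultimately show ?thesis
    using int_span_stable_mult[OF fin x y] algebraic_int_if_int_span_stable[OF fin] by blast
qed

lemma algebraic_int_plus: "algebraic_int (x :: complex) \<Longrightarrow> algebraic_int y \<Longrightarrow> algebraic_int (x + y)"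
  using algebraic_int_plus_times by blast

lemma algebraic_int_times: "algebraic_int (x :: complex) \<Longrightarrow> algebraic_int y \<Longrightarrow> algebraic_int (x * y)"
  using algebraic_int_plus_times by blast

lemma algebraic_int_diff: "algebraic_int (x :: complex) \<Longrightarrow> algebraic_int y \<Longrightarrow> algebraic_int (x - y)"
  using algebraic_int_plus[of x "- y"] by auto

section \<open>Minimal polynomials and Mahler measure\<close>

lemma of_int_poly_prod_mset_root:
  fixes M :: "int poly multiset" and z :: complex
  assumes "poly (of_int_poly (prod_mset M)) z = 0"
  shows "\<exists>f\<in>#M. poly (of_int_poly f) z = 0"
  using assms
proof (induction M)
  case (add f M)
  then have "poly (of_int_poly f) z * poly (of_int_poly (prod_mset M)) z = 0"
    by (simp add: of_int_poly_hom.hom_mult)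
  then show ?case
    using add.IH by auto
qed simp

lemma min_int_poly_exists:
  fixes z :: complex
  assumes "algebraic_int z"
  shows "\<exists>p. is_min_int_poly p z"
proof -
  obtain p where p: "poly (of_int_poly p) z = 0" "monic p"
    using assms unfolding algebraic_int_altdef_ipoly by blast
  have "p \<noteq> 0"
    using p(2) by auto
  have "normalize p = p"
    using p(2) unit_factor_mult_normalize[of p] by (simp add: unit_factor_poly_def)
  then have "normalize (prod_mset (prime_factorization p)) = p"
    using prod_mset_prime_factorization_weak[OF \<open>p \<noteq> 0\<close>] by simp
  then have "prod_mset (prime_factorization p) = unit_factor (prod_mset (prime_factorization p)) * p"
    by (metis unit_factor_mult_normalize)
  then have "poly (of_int_poly (prod_mset (prime_factorization p))) z = 0"
    using p(1) by (metis mult_zero_right of_int_poly_hom.hom_mult poly_mult)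
  then obtain f where f: "f \<in># prime_factorization p" "poly (of_int_poly f) z = 0"
    using of_int_poly_prod_mset_root by blast
  then have "irreducible f" "f \<noteq> 0"
    using in_prime_factors_imp_prime prime_elem_imp_irreducible by force+
  moreover have "degree f \<noteq> 0"
  proof
    assume "degree f = 0"
    then obtain c where "f = [:c:]"
      by (metis degree_eq_zeroE)
    then show False
      using f(2) \<open>f \<noteq> 0\<close> by simp
  qed
  ultimately have "content f = 1"
    using nonconst_poly_irreducible_iff by blast
  then show ?thesis
    unfolding is_min_int_poly_def using \<open>irreducible f\<close> f(2) by blast
qed

lemma prod_roots_le_mahler_measure:
  fixes q :: "int poly" and S :: "complex set"
  assumes "q \<noteq> 0" and "finite S" and roots: "\<And>r. r \<in> S \<Longrightarrow> poly (of_int_poly q) r = 0"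
  shows "(\<Prod>r\<in>S. max 1 (cmod r)) \<le> mahler_measure (of_int_poly q)"
proof -
  define Q :: "complex poly" where "Q = of_int_poly q"
  define R where "R = {r. poly Q r = 0}"
  have "Q \<noteq> 0"
    using assms(1) by (simp add: Q_def)
  then have "finite R"
    unfolding R_def by (rule poly_roots_finite)
  have "S \<subseteq> R"
    using roots by (auto simp: R_def Q_def)
  have "(\<Prod>r\<in>S. max 1 (cmod r)) \<le> (\<Prod>r\<in>S. max 1 (cmod r) ^ order r Q)"
  proof (rule prod_mono)
    fix r assume "r \<in> S"
    then have "order r Q \<noteq> 0"
      using \<open>S \<subseteq> R\<close> \<open>Q \<noteq> 0\<close> order_root[of Q r] by (auto simp: R_def)
    then have "max 1 (cmod r) ^ 1 \<le> max 1 (cmod r) ^ order r Q"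
      by (intro power_increasing) auto
    then show "0 \<le> max 1 (cmod r) \<and> max 1 (cmod r) \<le> max 1 (cmod r) ^ order r Q"
      by simp
  qed
  also have "\<dots> \<le> (\<Prod>r\<in>R. max 1 (cmod r) ^ order r Q)"
    by (rule prod_mono2[OF \<open>finite R\<close> \<open>S \<subseteq> R\<close>]) auto
  also have "\<dots> \<le> cmod (lead_coeff Q) * (\<Prod>r\<in>R. max 1 (cmod r) ^ order r Q)"
  proof -
    have "1 \<le> \<bar>lead_coeff q\<bar>"
      using assms(1) by (simp add: int_one_le_iff_zero_less)
    then have "1 \<le> cmod (lead_coeff Q)"
      by (simp add: Q_def)
    moreover have "0 \<le> (\<Prod>r\<in>R. max 1 (cmod r) ^ order r Q)"
      by (intro prod_nonneg) auto
    ultimately show ?thesis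
      using mult_right_mono by fastforce
  qed
  also have "\<dots> = mahler_measure (of_int_poly q)"
    by (simp add: mahler_measure_def Q_def R_def)
  finally show ?thesis .
qed

lemma of_int_poly_root_cnj:
  fixes q :: "int poly" and z :: complex
  assumes "poly (of_int_poly q) z = 0"
  shows "poly (of_int_poly q) (cnj z) = 0"
proof -
  have "map_poly cnj (of_int_poly q) = (of_int_poly q :: complex poly)"
    by (subst map_poly_map_poly) (auto simp: o_def)
  then show ?thesis
    using poly_cnj[of "of_int_poly q" z] assms by simp
qed

text \<open>The roots \<open>a, cnj a, b, cnj b\<close> are pairwise distinct, and \<open>\<bar>Im z\<bar> \<le> max 1 (cmod z)\<close>.\<close>
lemma Im_square_prod_le_mahler_measure:
  fixes q :: "int poly" and a b :: complex
  assumes "q \<noteq> 0" and "poly (of_int_poly q) a = 0" and "poly (of_int_poly q) b = 0"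
    and "Im a \<noteq> 0" and "Im b \<noteq> 0" and "(Im a)^2 \<noteq> (Im b)^2"
  shows "(Im a)^2 * (Im b)^2 \<le> mahler_measure (of_int_poly q)"
proof -
  define m where "m z = max 1 (cmod z)" for z :: complex
  have Im_le: "(Im z)^2 \<le> m z * m z" for z
  proof -
    have "\<bar>Im z\<bar> \<le> m z"
      using abs_Im_le_cmod[of z] by (simp add: m_def)
    then have "\<bar>Im z\<bar> * \<bar>Im z\<bar> \<le> m z * m z"
      by (intro mult_mono) auto
    then show ?thesis
      by (simp add: power2_eq_square)
  qed
  have "Im a \<noteq> Im b \<and> Im a \<noteq> - Im b"
    using assms(6) by (metis power2_minus)
  then have Im_neq: "Im a \<noteq> Im (cnj a)" "Im b \<noteq> Im (cnj b)" "Im a \<noteq> Im b"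
    "Im a \<noteq> Im (cnj b)" "Im (cnj a) \<noteq> Im b" "Im (cnj a) \<noteq> Im (cnj b)"
    using assms(4,5) by auto
  have neq: "x \<noteq> y" if "Im x \<noteq> Im y" for x y :: complex
    using that by auto
  have distinct: "a \<noteq> cnj a" "b \<noteq> cnj b" "a \<noteq> b" "a \<noteq> cnj b" "cnj a \<noteq> b" "cnj a \<noteq> cnj b"
    by (rule neq, fact Im_neq)+
  have "(Im a)^2 * (Im b)^2 \<le> (m a * m a) * (m b * m b)"
    using Im_le by (intro mult_mono) auto
  also have "\<dots> = (\<Prod>r\<in>{a, cnj a, b, cnj b}. m r)"
    using distinct by (simp add: m_def mult.assoc)
  also have "\<dots> \<le> mahler_measure (of_int_poly q)"
    unfolding m_def using assms(2,3)
    by (intro prod_roots_le_mahler_measure[OF assms(1)]) (auto intro: of_int_poly_root_cnj)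
  finally show ?thesis .
qed

lemma gen_field_least: "is_subfield_complex F \<Longrightarrow> S \<subseteq> F \<Longrightarrow> gen_field S \<subseteq> F"
  unfolding gen_field_def by blast

lemma gen_field_superset: "S \<subseteq> gen_field S"
  unfolding gen_field_def by blast

lemma is_subfield_complex_reals: "is_subfield_complex {z. Im z = 0}"
  unfolding is_subfield_complex_def by (simp add: Im_inverse)

section \<open>Real quadratic fields\<close>

text \<open>A pair \<open>(a, b)\<close> stands for \<open>a + b \<surd>D \<in> \<rat>(\<surd>D)\<close>; \<open>quad_emb r\<close> evaluates it at a square root \<open>r\<close>
  of \<open>D\<close>.\<close>
fun quad_emb :: "real \<Rightarrow> rat \<times> rat \<Rightarrow> real" where
  "quad_emb r (a, b) = of_rat a + of_rat b * r"

locale real_quadratic_field =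
  fixes D :: int
  assumes squarefree_D: "squarefree D" and D_gt_1: "D > 1"
begin

definition s :: real where
  "s = sqrt (real_of_int D)"

lemma s_pos: "s > 0"
  using D_gt_1 by (simp add: s_def)

lemma s_square [simp]: "s^2 = real_of_int D"
  using D_gt_1 by (simp add: s_def)

lemma minus_s_square: "(- s)^2 = real_of_int D"
  by simp

lemma s_times_s [simp]: "s * s = real_of_int D"
  by (metis s_square power2_eq_square)

lemma s_times_s_times [simp]: "s * (s * x) = real_of_int D * x"
  by (simp flip: mult.assoc)

lemma square_eq_D_iff: "r^2 = real_of_int D \<longleftrightarrow> r = s \<or> r = - s"
  using s_pos by (metis s_square power2_eq_iff)

lemma rat_square_eq_D_times_square:
  fixes a b :: rat
  assumes "a^2 = of_int D * b^2"
  shows "b = 0"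
proof (rule ccontr)
  assume "b \<noteq> 0"
  then have sq: "(a / b)^2 = of_int D"
    using assms by (simp add: field_simps power2_eq_square)
  have "a / b \<in> \<int>"
    by (rule Ints_if_square_times_squarefree_in_Ints[OF squarefree_1]) (use sq in simp)
  then obtain k where "a / b = of_int k"
    by (auto elim: Ints_cases)
  with sq have D: "D = k^2"
    by (metis of_int_eq_iff of_int_power)
  then have "k dvd 1"
    using squarefreeD[OF squarefree_D, of k] by simp
  then have "\<bar>k\<bar> = 1"
    by simp
  then have "D = 1"
    using D by (metis power2_abs one_power2)
  with D_gt_1 show False by simp
qed

fun quad_add :: "rat \<times> rat \<Rightarrow> rat \<times> rat \<Rightarrow> rat \<times> rat" where
  "quad_add (a, b) (c, d) = (a + c, b + d)"

fun quad_neg :: "rat \<times> rat \<Rightarrow> rat \<times> rat" where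
  "quad_neg (a, b) = (- a, - b)"

fun quad_mul :: "rat \<times> rat \<Rightarrow> rat \<times> rat \<Rightarrow> rat \<times> rat" where
  "quad_mul (a, b) (c, d) = (a * c + of_int D * b * d, a * d + b * c)"

fun quad_norm :: "rat \<times> rat \<Rightarrow> rat" where
  "quad_norm (a, b) = a^2 - of_int D * b^2"

fun quad_inv :: "rat \<times> rat \<Rightarrow> rat \<times> rat" where
  "quad_inv (a, b) = (a / quad_norm (a, b), - b / quad_norm (a, b))"

lemma quad_emb_add [simp]: "quad_emb r (quad_add p q) = quad_emb r p + quad_emb r q"
  by (cases p; cases q) (simp add: of_rat_add algebra_simps)

lemma quad_emb_neg [simp]: "quad_emb r (quad_neg p) = - quad_emb r p"
  by (cases p) (simp add: of_rat_minus)

lemma quad_emb_mult: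
  assumes "r^2 = real_of_int D"
  shows "quad_emb r (quad_mul p q) = quad_emb r p * quad_emb r q"
proof -
  have "real_of_int D = r * r"
    using assms by (simp add: power2_eq_square)
  then show ?thesis
    by (cases p; cases q) (simp add: of_rat_mult of_rat_add algebra_simps)
qed

lemma quad_emb_conj_mult: "quad_emb s p * quad_emb (- s) p = of_rat (quad_norm p)"
  by (cases p) (simp add: of_rat_diff of_rat_mult of_rat_power algebra_simps power2_eq_square)

lemma quad_norm_eq_0_iff: "quad_norm p = 0 \<longleftrightarrow> p = (0, 0)"
proof
  assume "quad_norm p = 0"
  then obtain a b where p: "p = (a, b)" and ab: "a^2 = of_int D * b^2"
    by (cases p) auto
  then have "b = 0"
    by (intro rat_square_eq_D_times_square)
  then show "p = (0, 0)"
    using p ab by simp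
qed simp

lemma quad_emb_eq_0:
  assumes "r^2 = real_of_int D" and "quad_emb r p = 0"
  shows "p = (0, 0)"
proof -
  have "quad_emb r p * quad_emb (- r) p = 0"
    using assms(2) by simp
  moreover have "r = s \<or> r = - s"
    using assms(1) square_eq_D_iff by blast
  ultimately have "of_rat (quad_norm p) = (0 :: real)"
    using quad_emb_conj_mult[of p] by (auto simp: mult.commute)
  then show ?thesis
    using quad_norm_eq_0_iff by simp
qed

lemma quad_emb_inverse:
  assumes "r^2 = real_of_int D" and "p \<noteq> (0, 0)"
  shows "quad_emb r (quad_inv p) * quad_emb r p = 1"
proof -
  obtain a b where p: "p = (a, b)"
    by force
  have "r = s \<or> r = - s"
    using assms(1) square_eq_D_iff by blast
  then have "quad_emb r (a, b) * quad_emb r (- a, b) = - of_rat (quad_norm (a, b))"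
    using quad_emb_conj_mult[of "(a, b)"] quad_emb_conj_mult[of "(- a, b)"]
    by (auto simp: of_rat_minus algebra_simps)
  moreover have "of_rat (quad_norm p) \<noteq> (0 :: real)"
    using assms(2) quad_norm_eq_0_iff by simp
  ultimately show ?thesis
    unfolding p by (simp add: of_rat_divide of_rat_minus field_simps)
qed

end

section \<open>Totally imaginary cyclic quartic fields\<close>

locale imaginary_cyclic_quartic =
  fixes A B C D :: int
  assumes A_neg: "A < 0" and squarefree_A: "squarefree A"
    and B_pos: "B > 0" and C_pos: "C > 0" and D_eq: "D = B^2 + C^2"
    and squarefree_D: "squarefree D" and coprime_A_D: "coprime A D"

sublocale imaginary_cyclic_quartic \<subseteq> real_quadratic_field D
proof
  show "squarefree D"
    by (fact squarefree_D)
  have "B^2 > 0" "C^2 > 0"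
    using B_pos C_pos by simp_all
  then show "D > 1"
    using D_eq by linarith
qed

context imaginary_cyclic_quartic
begin

lemma of_int_D_eq: "of_int D = of_int B ^ 2 + of_int C ^ 2"
  using D_eq by simp

definition tau :: "rat \<times> rat" where
  "tau = (of_int (A * D), of_int (A * B))"

lemma quad_emb_tau: "quad_emb r tau = of_int A * (of_int D + of_int B * r)"
  by (simp add: tau_def of_rat_mult algebra_simps)

lemma quad_emb_tau_neg:
  assumes "r^2 = real_of_int D"
  shows "quad_emb r tau < 0"
proof -
  have "B^2 < D"
    using D_eq C_pos by simp
  then have "real_of_int B ^ 2 < real_of_int D"
    by (metis of_int_less_iff of_int_power)
  have "\<bar>of_int B * r\<bar>^2 = real_of_int B ^ 2 * real_of_int D"
    using assms by (simp add: power_mult_distrib)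
  also have "\<dots> < real_of_int D * real_of_int D"
    using \<open>real_of_int B ^ 2 < real_of_int D\<close> D_gt_1 by (intro mult_strict_right_mono) auto
  finally have "\<bar>of_int B * r\<bar>^2 < (real_of_int D)^2"
    by (simp add: power2_eq_square)
  then have "\<bar>of_int B * r\<bar> < real_of_int D"
    by (rule power_less_imp_less_base) (use D_gt_1 in simp)
  then have "of_int D + of_int B * r > 0"
    by linarith
  then show ?thesis
    unfolding quad_emb_tau using A_neg by (simp add: mult_neg_pos)
qed

definition theta :: "real \<Rightarrow> complex" where
  "theta r = csqrt (of_real (quad_emb r tau))"

lemma theta_times_theta: "theta r * theta r = of_real (quad_emb r tau)"
  by (metis theta_def power2_csqrt power2_eq_square)

lemma theta_eq:
  assumes "r^2 = real_of_int D"
  shows "theta r = \<i> * of_real (sqrt (- quad_emb r tau))"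
  using quad_emb_tau_neg[OF assms] by (simp add: theta_def)

lemma Re_theta: "r^2 = real_of_int D \<Longrightarrow> Re (theta r) = 0"
  by (simp add: theta_eq)

lemma Im_theta_pos:
  assumes "r^2 = real_of_int D"
  shows "Im (theta r) > 0"
  using quad_emb_tau_neg[OF assms] by (simp add: theta_eq[OF assms])

lemma Im_theta_square:
  assumes "r^2 = real_of_int D"
  shows "(Im (theta r))^2 = - quad_emb r tau"
  using quad_emb_tau_neg[OF assms] by (simp add: theta_eq[OF assms])

lemma cnj_theta: "r^2 = real_of_int D \<Longrightarrow> cnj (theta r) = - theta r"
  by (simp add: theta_eq)

lemma algebraic_int_sqrt_D:
  assumes "r^2 = real_of_int D"
  shows "algebraic_int (of_real r :: complex)"
proof -
  have "algebraic_int s"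
    unfolding s_def by (intro algebraic_int_sqrt) simp
  then show ?thesis
    using assms square_eq_D_iff by auto
qed

lemma algebraic_int_theta:
  assumes "r^2 = real_of_int D"
  shows "algebraic_int (theta r)"
proof -
  have "(of_real (quad_emb r tau) :: complex) = of_int A * (of_int D + of_int B * of_real r)"
    by (simp add: quad_emb_tau)
  also have "algebraic_int \<dots>"
    using algebraic_int_sqrt_D[OF assms]
    by (intro algebraic_int_times algebraic_int_plus) auto
  finally show ?thesis
    unfolding theta_def by (rule algebraic_int_csqrt)
qed

text \<open>Both imaginary parts are positive and the square of their product is
  \<open>A\<^sup>2 (D + B s) (D - B s) = A\<^sup>2 C\<^sup>2 D\<close>.\<close>
lemma Im_theta_mult: "Im (theta s) * Im (theta (- s)) = - A * C * s"
proof -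
  have "(Im (theta s) * Im (theta (- s)))^2 = quad_emb s tau * quad_emb (- s) tau"
    by (simp add: power_mult_distrib Im_theta_square)
  also have "\<dots> = of_int A ^ 2 * (of_int D * of_int D - of_int B ^ 2 * s^2)"
    unfolding quad_emb_tau by (simp add: power2_eq_square algebra_simps)
  also have "\<dots> = (of_int A * of_int C * s)^2"
    unfolding s_square power_mult_distrib by (simp add: of_int_D_eq power2_eq_square algebra_simps)
  finally have "(Im (theta s) * Im (theta (- s)))^2 = (- A * C * s)^2"
    by simp
  moreover have "Im (theta s) * Im (theta (- s)) \<ge> 0"
    using Im_theta_pos[of s] Im_theta_pos[of "- s"] by simp
  moreover have "real_of_int A * real_of_int C \<le> 0"
    using A_neg C_pos by (simp add: mult_nonpos_nonneg)
  then have "- A * C * s \<ge> 0"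
    using s_pos by (simp add: mult_nonpos_nonneg)
  ultimately show ?thesis
    by (metis power2_eq_iff_nonneg)
qed

lemma theta_mult: "theta s * theta (- s) = of_real (A * C * s)"
proof -
  have "theta s * theta (- s) = - of_real (Im (theta s) * Im (theta (- s)))"
    by (simp add: complex_eq_iff Re_theta)
  then show ?thesis
    by (simp add: Im_theta_mult)
qed

text \<open>A pair \<open>(x, y)\<close> over \<open>\<rat>(\<surd>D)\<close> stands for \<open>x + y \<theta>\<close>; \<open>quart_emb r\<close> is the embedding
  sending \<open>\<surd>D\<close> to \<open>r\<close> and \<open>\<theta>\<close> to \<open>theta r\<close>.\<close>
fun quart_emb :: "real \<Rightarrow> (rat \<times> rat) \<times> (rat \<times> rat) \<Rightarrow> complex" where
  "quart_emb r (x, y) = of_real (quad_emb r x) + of_real (quad_emb r y) * theta r"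

fun quart_add :: "(rat \<times> rat) \<times> (rat \<times> rat) \<Rightarrow> (rat \<times> rat) \<times> (rat \<times> rat) \<Rightarrow> (rat \<times> rat) \<times> (rat \<times> rat)" where
  "quart_add (x1, y1) (x2, y2) = (quad_add x1 x2, quad_add y1 y2)"

fun quart_neg :: "(rat \<times> rat) \<times> (rat \<times> rat) \<Rightarrow> (rat \<times> rat) \<times> (rat \<times> rat)" where
  "quart_neg (x, y) = (quad_neg x, quad_neg y)"

fun quart_mul :: "(rat \<times> rat) \<times> (rat \<times> rat) \<Rightarrow> (rat \<times> rat) \<times> (rat \<times> rat) \<Rightarrow> (rat \<times> rat) \<times> (rat \<times> rat)" where
  "quart_mul (x1, y1) (x2, y2) =
     (quad_add (quad_mul x1 x2) (quad_mul (quad_mul y1 y2) tau), quad_add (quad_mul x1 y2) (quad_mul y1 x2))"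

definition quart_const :: "int \<Rightarrow> (rat \<times> rat) \<times> (rat \<times> rat)" where
  "quart_const c = ((of_int c, 0), (0, 0))"

text \<open>Inversion via the relative norm \<open>x\<^sup>2 - y\<^sup>2 \<tau>\<close> down to \<open>\<rat>(\<surd>D)\<close>.\<close>
fun quart_inv :: "(rat \<times> rat) \<times> (rat \<times> rat) \<Rightarrow> (rat \<times> rat) \<times> (rat \<times> rat)" where
  "quart_inv (x, y) =
     (let n = quad_inv (quad_add (quad_mul x x) (quad_neg (quad_mul (quad_mul y y) tau))) in (quad_mul x n, quad_neg (quad_mul y n)))"

lemma quart_emb_add [simp]: "quart_emb r (quart_add P Q) = quart_emb r P + quart_emb r Q"
  by (cases P; cases Q) (simp del: quad_add.simps add: algebra_simps)

lemma quart_emb_neg [simp]: "quart_emb r (quart_neg P) = - quart_emb r P"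
  by (cases P) (simp del: quad_neg.simps add: algebra_simps)

lemma quart_emb_const [simp]: "quart_emb r (quart_const c) = of_int c"
  by (simp add: quart_const_def)

lemma quart_emb_mult:
  assumes "r^2 = real_of_int D"
  shows "quart_emb r (quart_mul P Q) = quart_emb r P * quart_emb r Q"
proof -
  obtain x1 y1 x2 y2 where PQ: "P = (x1, y1)" "Q = (x2, y2)"
    by (cases P, cases Q) auto
  let ?e = "\<lambda>x. complex_of_real (quad_emb r x)"
  have "quart_emb r P * quart_emb r Q
      = ?e x1 * ?e x2 + ?e y1 * ?e y2 * (theta r * theta r) + (?e x1 * ?e y2 + ?e y1 * ?e x2) * theta r"
    unfolding PQ by (simp add: algebra_simps)
  also have "\<dots> = quart_emb r (quart_mul P Q)"
    unfolding PQ theta_times_theta by (simp add: quad_emb_mult[OF assms] algebra_simps)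
  finally show ?thesis ..
qed

lemma quart_emb_eq_0:
  assumes "r^2 = real_of_int D" and "quart_emb r P = 0"
  shows "P = ((0, 0), (0, 0))"
proof -
  obtain x y where P: "P = (x, y)"
    by (cases P)
  have "quad_emb r x = Re (quart_emb r P)" and "quad_emb r y * Im (theta r) = Im (quart_emb r P)"
    by (simp_all add: P Re_theta[OF assms(1)])
  then have "quad_emb r x = 0" and "quad_emb r y = 0"
    using assms(2) Im_theta_pos[OF assms(1)] by simp_all
  then show ?thesis
    using quad_emb_eq_0[OF assms(1)] P by blast
qed

lemma relative_norm_pos:
  assumes "r^2 = real_of_int D" and "X \<noteq> 0 \<or> Y \<noteq> 0"
  shows "X * X - Y * Y * quad_emb r tau > 0"
proof -
  have tau: "- quad_emb r tau > 0"
    using quad_emb_tau_neg[OF assms(1)] by simp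
  from assms(2) have "X * X + Y * Y * (- quad_emb r tau) > 0"
  proof (elim disjE)
    assume "X \<noteq> 0"
    then have "X * X > 0"
      by (metis not_real_square_gt_zero)
    moreover have "Y * Y * (- quad_emb r tau) \<ge> 0"
      using tau by (intro mult_nonneg_nonneg zero_le_square) simp
    ultimately show ?thesis
      by linarith
  next
    assume "Y \<noteq> 0"
    then have "Y * Y * (- quad_emb r tau) > 0"
      using tau by (metis mult_pos_pos not_real_square_gt_zero)
    moreover have "X * X \<ge> 0"
      by simp
    ultimately show ?thesis
      by linarith
  qed
  then show ?thesis
    by simp
qed

lemma quart_emb_inverse:
  assumes "r^2 = real_of_int D" and "quart_emb r P \<noteq> 0"
  shows "quart_emb r (quart_inv P) * quart_emb r P = 1"
proof -
  obtain x y where P: "P = (x, y)"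
    by (cases P)
  define n where "n = quad_add (quad_mul x x) (quad_neg (quad_mul (quad_mul y y) tau))"
  let ?x = "quad_emb r x" and ?y = "quad_emb r y"
  have n: "quad_emb r n = ?x * ?x - ?y * ?y * quad_emb r tau"
    unfolding n_def by (simp add: quad_emb_mult[OF assms(1)])
  have "?x \<noteq> 0 \<or> ?y \<noteq> 0"
    using assms quad_emb_eq_0[OF assms(1)] P by auto
  then have "quad_emb r n > 0"
    unfolding n by (rule relative_norm_pos[OF assms(1)])
  then have "n \<noteq> (0, 0)"
    by auto
  then have "quad_emb r (quad_inv n) * quad_emb r n = 1"
    by (rule quad_emb_inverse[OF assms(1)])
  then have inv: "quad_emb r (quad_inv n) * (?x * ?x - ?y * ?y * quad_emb r tau) = 1"
    by (simp only: n)
  have "quart_emb r (quart_inv P) * quart_emb r P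
      = of_real (quad_emb r (quad_inv n)) * (of_real (?x * ?x) - of_real (?y * ?y) * (theta r * theta r))"
    unfolding P by (simp add: n_def[symmetric] Let_def quad_emb_mult[OF assms(1)] algebra_simps)
  also have "\<dots> = of_real (quad_emb r (quad_inv n) * (?x * ?x - ?y * ?y * quad_emb r tau))"
    unfolding theta_times_theta of_real_mult of_real_diff ..
  finally show ?thesis
    using inv by simp
qed

lemma is_subfield_range_quart_emb:
  assumes "r^2 = real_of_int D"
  shows "is_subfield_complex (range (quart_emb r))"
  unfolding is_subfield_complex_def
proof (intro conjI ballI)
  show "0 \<in> range (quart_emb r)" "1 \<in> range (quart_emb r)"
    using quart_emb_const[of r 0] quart_emb_const[of r 1] by (metis of_int_0 of_int_1 rangeI)+
  fix a b
  assume "a \<in> range (quart_emb r)" "b \<in> range (quart_emb r)"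
  then obtain P Q where PQ: "a = quart_emb r P" "b = quart_emb r Q"
    by auto
  show "a + b \<in> range (quart_emb r)"
    unfolding PQ by (metis quart_emb_add rangeI)
  show "a - b \<in> range (quart_emb r)"
    unfolding PQ by (metis quart_emb_add quart_emb_neg diff_conv_add_uminus rangeI)
  show "a * b \<in> range (quart_emb r)"
    unfolding PQ by (metis quart_emb_mult[OF assms] rangeI)
next
  fix a
  assume "a \<in> range (quart_emb r)"
  then obtain P where P: "a = quart_emb r P"
    by auto
  show "inverse a \<in> range (quart_emb r)"
  proof (cases "a = 0")
    case True
    then show ?thesis
      by (metis quart_emb_const inverse_zero of_int_0 rangeI)
  next
    case False
    then have "inverse a = quart_emb r (quart_inv P)"
      using quart_emb_inverse[OF assms, of P] P by (simp add: inverse_unique mult.commute)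
    then show ?thesis
      by simp
  qed
qed

lemma gen_field_theta_subset:
  assumes "r^2 = real_of_int D"
  shows "gen_field {theta r} \<subseteq> range (quart_emb r)"
proof -
  have "theta r = quart_emb r ((0, 0), (1, 0))"
    by simp
  then show ?thesis
    by (metis gen_field_least[OF is_subfield_range_quart_emb[OF assms]] empty_subsetI
        insert_subset rangeI)
qed

text \<open>The witness is the Horner evaluation of \<open>p\<close> at \<open>z\<close> in the pair arithmetic, which every
  embedding respects.\<close>
lemma quart_emb_poly:
  fixes p :: "int poly"
  shows "\<exists>w. \<forall>r. r^2 = real_of_int D \<longrightarrow>
    quart_emb r w = poly (of_int_poly p) (quart_emb r z)"
proof (induction p)
  case 0
  show ?case
    by (rule exI[of _ "quart_const 0"]) simp
next
  case (pCons a p)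
  then obtain w where w: "\<forall>r. r^2 = real_of_int D \<longrightarrow>
      quart_emb r w = poly (of_int_poly p) (quart_emb r z)"
    by blast
  show ?case
    by (rule exI[of _ "quart_add (quart_const a) (quart_mul z w)"])
      (simp add: quart_emb_mult w of_int_hom.map_poly_pCons_hom)
qed

lemma quart_emb_root_transfer:
  fixes p :: "int poly"
  assumes "r^2 = real_of_int D" and "r'^2 = real_of_int D"
    and "poly (of_int_poly p) (quart_emb r z) = 0"
  shows "poly (of_int_poly p) (quart_emb r' z) = 0"
proof -
  obtain w where w: "\<forall>r. r^2 = real_of_int D \<longrightarrow>
      quart_emb r w = poly (of_int_poly p) (quart_emb r z)"
    using quart_emb_poly by blast
  then have "w = ((0, 0), (0, 0))"
    using assms(1,3) quart_emb_eq_0 by auto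
  then show ?thesis
    using w assms(2) by force
qed

lemma algebraic_int_quart_emb_transfer:
  assumes "r^2 = real_of_int D" and "r'^2 = real_of_int D"
    and "algebraic_int (quart_emb r z)"
  shows "algebraic_int (quart_emb r' z)"
  using assms quart_emb_root_transfer unfolding algebraic_int_altdef_ipoly by blast

lemma algebraic_int_quad_emb_coords:
  assumes "algebraic_int (of_real (quad_emb s w) :: complex)"
  shows "\<exists>e f :: int. w = (of_int e / 2, of_int f / 2)"
proof -
  obtain u v where w: "w = (u, v)"
    by (cases w)
  have "algebraic_int (quart_emb (- s) (w, (0, 0)))"
    using assms by (intro algebraic_int_quart_emb_transfer[OF s_square minus_s_square]) simp
  then have conj: "algebraic_int (of_real (quad_emb (- s) w) :: complex)"
    by simp
  have "(of_real (quad_emb s w) + of_real (quad_emb (- s) w) :: complex) = of_rat (2 * u)"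
    by (simp add: w of_rat_mult of_real_of_rat)
  then have "2 * u \<in> \<int>"
    using algebraic_int_plus[OF assms conj] by (intro Ints_if_algebraic_int_of_rat) simp
  then obtain e where e: "2 * u = of_int e"
    by (auto elim: Ints_cases)
  have "(of_real (quad_emb s w) * of_real (quad_emb (- s) w) :: complex) = of_rat (quad_norm w)"
    by (metis quad_emb_conj_mult of_real_mult of_real_of_rat)
  then have "quad_norm w \<in> \<int>"
    using algebraic_int_times[OF assms conj] by (intro Ints_if_algebraic_int_of_rat) simp
  then obtain n where n: "quad_norm w = of_int n"
    by (auto elim: Ints_cases)
  have "(2 * v)^2 * of_int D = (2 * u)^2 - 4 * quad_norm w"
    by (simp add: w algebra_simps power2_eq_square)
  then have "(2 * v)^2 * of_int D \<in> \<int>"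
    by (simp add: e n)
  then have "2 * v \<in> \<int>"
    by (rule Ints_if_square_times_squarefree_in_Ints[OF squarefree_D])
  then obtain f where "2 * v = of_int f"
    by (auto elim: Ints_cases)
  with e show ?thesis
    by (intro exI[of _ e] exI[of _ f]) (simp add: w field_simps)
qed

lemma A_D_dvd_if_relations:
  fixes e f g h :: int
  assumes sq: "e^2 = D * (2 * A * h - f^2)" and prod: "e * f = A * g"
  shows "A * D dvd e"
proof -
  have "e^3 = e * (D * (2 * A * h - f^2))"
    unfolding sq[symmetric] by (simp add: power3_eq_cube power2_eq_square)
  also have "\<dots> = A * (D * (2 * h * e - f * g))"
    by (simp add: algebra_simps power2_eq_square flip: prod)
  finally have "A dvd e ^ 3"
    by simp
  then have "A dvd e"
    by (rule squarefree_dvd_power_imp_dvd[OF squarefree_A])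
  moreover have "D dvd e ^ 2"
    using sq by simp
  then have "D dvd e"
    by (rule squarefree_dvd_power_imp_dvd[OF squarefree_D])
  ultimately show ?thesis
    using coprime_A_D by (rule divides_mult)
qed

text \<open>With \<open>z = (e + f s) / 2\<close> and \<open>w = (g + h s) / 2\<close>, comparing coordinates in the relation gives
  \<open>e\<^sup>2 = D (2 A h - f\<^sup>2)\<close> and \<open>e f = A g\<close>.\<close>
lemma double_fst_div_A_D_Ints:
  assumes "algebraic_int (of_real (quad_emb s z) :: complex)"
    and "algebraic_int (of_real (quad_emb s w) :: complex)"
    and "(quad_emb s z)^2 = of_int A * s * quad_emb s w"
  shows "2 * fst z / of_int (A * D) \<in> \<int>"
proof -
  obtain e f where z: "z = (of_int e / 2, of_int f / 2)"
    using algebraic_int_quad_emb_coords[OF assms(1)] by blast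
  obtain g h where w: "w = (of_int g / 2, of_int h / 2)"
    using algebraic_int_quad_emb_coords[OF assms(2)] by blast
  have "quad_emb s (of_int (e^2 + D * f^2 - 2 * A * D * h), of_int (2 * e * f - 2 * A * g))
      = 4 * ((quad_emb s z)^2 - of_int A * s * quad_emb s w)"
    by (simp add: z w of_rat_add of_rat_diff of_rat_mult of_rat_divide power2_eq_square
        algebra_simps)
  also have "\<dots> = 0"
    using assms(3) by simp
  finally have "(of_int (e^2 + D * f^2 - 2 * A * D * h), of_int (2 * e * f - 2 * A * g))
      = (0 :: rat, 0 :: rat)"
    by (rule quad_emb_eq_0[OF s_square])
  then have "e^2 + D * f^2 - 2 * A * D * h = 0 \<and> 2 * e * f - 2 * A * g = 0"
    by (simp only: prod.inject of_int_eq_0_iff)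
  then have "e^2 = D * (2 * A * h - f^2)" and "e * f = A * g"
    by (simp_all add: algebra_simps)
  then have "A * D dvd e"
    by (rule A_D_dvd_if_relations)
  then obtain k where "e = A * D * k"
    by blast
  moreover have "A * D \<noteq> 0"
    using A_neg D_gt_1 by simp
  ultimately show ?thesis
    by (simp add: z)
qed

lemma quad_emb_s_tau: "quad_emb s tau = of_int A * s * (s + of_int B)"
  by (simp add: quad_emb_tau algebra_simps)

lemma algebraic_int_twice_imag:
  assumes "algebraic_int (quart_emb s (x, y))"
  shows "algebraic_int (2 * of_real (quad_emb s y) * theta s)"
proof -
  have "2 * of_real (quad_emb s y) * theta s = quart_emb s (x, y) - cnj (quart_emb s (x, y))"
    by (simp add: cnj_theta)
  also have "algebraic_int \<dots>"
    by (intro algebraic_int_diff algebraic_int_cnj assms)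
  finally show ?thesis .
qed

lemma twice_imag_square:
  "(2 * of_real Y * theta s) * (2 * of_real Y * theta s) = of_real (4 * Y^2 * quad_emb s tau)"
proof -
  have "(2 * of_real Y * theta s) * (2 * of_real Y * theta s) = 4 * of_real Y ^ 2 * (theta s * theta s)"
    by (simp add: algebra_simps power2_eq_square)
  then show ?thesis
    by (simp add: theta_times_theta)
qed

text \<open>\<open>\<gamma> \<theta>\<close> and \<open>\<gamma>\<^sup>2 (s + B)\<close> lie in \<open>\<rat>(s)\<close> and \<open>(\<gamma> \<theta>)\<^sup>2 = A s \<gamma>\<^sup>2 (s + B)\<close>, because
  \<open>\<theta>\<^sup>2 = A s (s + B)\<close>.\<close>
lemma Ints_via_theta:
  fixes c d :: rat
  defines "\<gamma> \<equiv> 2 * of_real (quad_emb s (c, d)) * theta s"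
  assumes "algebraic_int \<gamma>"
  shows "4 * (c + d * of_int B) \<in> \<int>"
proof -
  define Y where "Y = quad_emb s (c, d)"
  define z where "z = quad_mul (2, 0) (quad_mul (c, d) tau)"
  define w where "w = quad_mul (quad_mul (4, 0) (quad_mul (c, d) (c, d))) (quad_mul tau (of_int B, 1))"
  have z: "quad_emb s z = 2 * Y * quad_emb s tau"
    and w: "quad_emb s w = 4 * Y^2 * quad_emb s tau * (of_int B + s)"
    unfolding z_def w_def quad_emb_mult[OF s_square] Y_def by (simp_all add: power2_eq_square)
  have "(of_real (quad_emb s z) :: complex) = \<gamma> * theta s"
    by (simp add: z \<gamma>_def Y_def theta_times_theta mult.assoc)
  also have "algebraic_int \<dots>"
    using assms(2) algebraic_int_theta[OF s_square] by (rule algebraic_int_times)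
  finally have z_int: "algebraic_int (of_real (quad_emb s z) :: complex)" .
  have "(of_real (quad_emb s w) :: complex) = \<gamma> * \<gamma> * (of_int B + of_real s)"
    unfolding w \<gamma>_def Y_def twice_imag_square by simp
  also have "algebraic_int \<dots>"
    using assms(2) algebraic_int_sqrt_D[OF s_square]
    by (intro algebraic_int_times algebraic_int_plus algebraic_int_of_int)
  finally have w_int: "algebraic_int (of_real (quad_emb s w) :: complex)" .
  have "(quad_emb s z)^2 = of_int A * s * quad_emb s w"
    unfolding z w quad_emb_s_tau
    by (simp add: power2_eq_square algebra_simps del: s_times_s s_times_s_times)
  then have "2 * fst z / of_int (A * D) \<in> \<int>"
    by (rule double_fst_div_A_D_Ints[OF z_int w_int])
  moreover have "2 * fst z / of_int (A * D) = 4 * (c + d * of_int B)"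
    using A_neg D_gt_1 by (simp add: z_def tau_def field_simps)
  ultimately show ?thesis
    by simp
qed

text \<open>Here \<open>\<gamma> \<theta>' = 2 y A C s\<close> and \<open>\<gamma>\<^sup>2 (s - B)\<close> lie in \<open>\<rat>(s)\<close>, and
  \<open>(\<gamma> \<theta>')\<^sup>2 = A s \<gamma>\<^sup>2 (s - B)\<close> because \<open>s\<^sup>2 - B\<^sup>2 = C\<^sup>2\<close>.\<close>
lemma Ints_via_theta':
  fixes c d :: rat
  defines "\<gamma> \<equiv> 2 * of_real (quad_emb s (c, d)) * theta s"
  assumes "algebraic_int \<gamma>"
  shows "4 * of_int C * d \<in> \<int>"
proof -
  define Y where "Y = quad_emb s (c, d)"
  define z where "z = quad_mul (c, d) (0, of_int (2 * A * C))"
  define w where "w = quad_mul (quad_mul (4, 0) (quad_mul (c, d) (c, d))) (quad_mul tau (- of_int B, 1))"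
  have z: "quad_emb s z = 2 * Y * (of_int A * of_int C * s)"
    unfolding z_def quad_emb_mult[OF s_square] Y_def by (simp add: of_rat_mult algebra_simps)
  have w: "quad_emb s w = 4 * Y^2 * quad_emb s tau * (s - of_int B)"
    unfolding w_def quad_emb_mult[OF s_square] Y_def by (simp add: power2_eq_square of_rat_minus)
  have "(of_real (quad_emb s z) :: complex) = \<gamma> * theta (- s)"
    by (simp add: z \<gamma>_def Y_def theta_mult mult.assoc)
  also have "algebraic_int \<dots>"
    using assms(2) algebraic_int_theta[OF minus_s_square] by (rule algebraic_int_times)
  finally have z_int: "algebraic_int (of_real (quad_emb s z) :: complex)" .
  have "(of_real (quad_emb s w) :: complex) = \<gamma> * \<gamma> * (of_real s - of_int B)"
    unfolding w \<gamma>_def Y_def twice_imag_square by simp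
  also have "algebraic_int \<dots>"
    using assms(2) algebraic_int_sqrt_D[OF s_square]
    by (intro algebraic_int_times algebraic_int_diff algebraic_int_of_int)
  finally have w_int: "algebraic_int (of_real (quad_emb s w) :: complex)" .
  have "(quad_emb s z)^2 = of_int A * s * quad_emb s w"
  proof -
    have BC: "s^2 - of_int B ^ 2 = of_int C ^ 2"
      unfolding s_square of_int_D_eq by simp
    have "of_int A * s * quad_emb s w = 4 * Y^2 * of_int A ^ 2 * s^2 * (s^2 - of_int B ^ 2)"
      unfolding w quad_emb_s_tau
      by (simp add: power2_eq_square algebra_simps del: s_times_s s_times_s_times)
    also have "\<dots> = (quad_emb s z)^2"
      unfolding BC z by (simp add: power_mult_distrib mult_ac del: s_square)
    finally show ?thesis ..
  qed
  then have "2 * fst z / of_int (A * D) \<in> \<int>"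
    by (rule double_fst_div_A_D_Ints[OF z_int w_int])
  moreover have "2 * fst z / of_int (A * D) = 4 * of_int C * d"
    using A_neg D_gt_1 by (simp add: z_def field_simps)
  ultimately show ?thesis
    by simp
qed

lemma generator_second_coord_nonzero:
  assumes "gen_field {quart_emb s (x, y)} = gen_field {theta s}"
  shows "y \<noteq> (0, 0)"
proof
  assume "y = (0, 0)"
  then have "gen_field {quart_emb s (x, y)} \<subseteq> {z. Im z = 0}"
    by (intro gen_field_least is_subfield_complex_reals) simp
  then have "Im (theta s) = 0"
    using assms gen_field_superset by blast
  then show False
    using Im_theta_pos[OF s_square] by simp
qed

lemma Im_quart_emb_square_neq:
  assumes "y \<noteq> (0, 0)"
  shows "(Im (quart_emb s (x, y)))^2 \<noteq> (Im (quart_emb (- s) (x, y)))^2"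
proof
  obtain c d where y: "y = (c, d)"
    by (cases y)
  define X where "X = of_int B * (c^2 + of_int D * d^2) + 2 * c * d * of_int D"
  assume eq: "(Im (quart_emb s (x, y)))^2 = (Im (quart_emb (- s) (x, y)))^2"
  have "(Im (quart_emb s (x, y)))^2 - (Im (quart_emb (- s) (x, y)))^2
      = (quad_emb (- s) y)^2 * quad_emb (- s) tau - (quad_emb s y)^2 * quad_emb s tau"
    by (simp add: power_mult_distrib Im_theta_square[OF s_square] Im_theta_square[OF minus_s_square]
        del: quad_emb.simps)
  also have "\<dots> = - 2 * of_int A * s * of_rat X"
    by (simp add: y X_def quad_emb_tau power2_eq_square of_rat_add of_rat_mult algebra_simps)
  finally have "of_rat X = (0 :: real)"
    using eq A_neg s_pos by simp
  then have X: "X = 0"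
    by simp
  have "(of_int B * c + of_int D * d)^2 = of_int D * (of_int C * d)^2 + of_int B * X"
    by (simp add: X_def of_int_D_eq power2_eq_square algebra_simps)
  then have "of_int C * d = 0"
    using X by (intro rat_square_eq_D_times_square) simp
  then have "d = 0"
    using C_pos by simp
  then have "of_int B * c^2 = 0"
    using X by (simp add: X_def)
  then have "c = 0"
    using B_pos by simp
  with \<open>d = 0\<close> show False
    using assms y by simp
qed

lemma Im_quart_emb_mult:
  "Im (quart_emb s (x, y)) * Im (quart_emb (- s) (x, y)) = - of_int A * of_int C * s * of_rat (quad_norm y)"
proof -
  have "Im (quart_emb s (x, y)) * Im (quart_emb (- s) (x, y))
      = (quad_emb s y * quad_emb (- s) y) * (Im (theta s) * Im (theta (- s)))"
    by (simp del: quad_emb.simps)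
  then show ?thesis
    by (simp only: quad_emb_conj_mult Im_theta_mult) (simp add: algebra_simps)
qed

text \<open>With \<open>l = 4 (c + d B)\<close> and \<open>m = 4 C d\<close> one has \<open>16 C (c\<^sup>2 - D d\<^sup>2) = C l\<^sup>2 - 2 B l m - C m\<^sup>2\<close>.\<close>
lemma quad_norm_lower_bound:
  assumes "(c, d) \<noteq> (0, 0)" and "4 * (c + d * of_int B) \<in> \<int>" and "4 * of_int C * d \<in> \<int>"
  shows "1 \<le> 256 * (real_of_int C)^2 * (of_rat (quad_norm (c, d)))^2"
proof -
  obtain l m where l: "4 * (c + d * of_int B) = of_int l" and m: "4 * of_int C * d = of_int m"
    using assms(2,3) by (auto elim!: Ints_cases)
  have "16 * of_int C * quad_norm (c, d)
      = of_int C * (4 * (c + d * of_int B))^2 - 2 * of_int B * (4 * (c + d * of_int B)) * (4 * of_int C * d)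
        - of_int C * (4 * of_int C * d)^2"
    by (simp add: of_int_D_eq power2_eq_square algebra_simps)
  also have "\<dots> = of_int (C * l^2 - 2 * B * l * m - C * m^2)"
    unfolding l m by simp
  finally have n: "16 * of_int C * quad_norm (c, d) = of_int (C * l^2 - 2 * B * l * m - C * m^2)" .
  have "quad_norm (c, d) \<noteq> 0"
    using assms(1) quad_norm_eq_0_iff by blast
  then have "16 * of_int C * quad_norm (c, d) \<noteq> 0"
    using C_pos by simp
  then have "(of_int (C * l^2 - 2 * B * l * m - C * m^2) :: rat) \<noteq> 0"
    by (simp only: n[symmetric] not_False_eq_True)
  then have "C * l^2 - 2 * B * l * m - C * m^2 \<noteq> 0"
    by (metis of_int_0)
  then have "1 \<le> (C * l^2 - 2 * B * l * m - C * m^2)^2"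
    by (simp add: int_one_le_iff_zero_less)
  then have "(1 :: rat) \<le> (of_int (C * l^2 - 2 * B * l * m - C * m^2))^2"
    by (metis of_int_1_le_iff of_int_power)
  then have "of_rat 1 \<le> (of_rat (256 * (of_int C)^2 * (quad_norm (c, d))^2) :: real)"
    unfolding n[symmetric] of_rat_less_eq by (simp add: power_mult_distrib)
  then show ?thesis
    by (simp add: of_rat_mult of_rat_power)
qed

text \<open>\<open>\<alpha>, cnj \<alpha>, \<beta>, cnj \<beta>\<close> are roots of the minimal polynomial of \<open>\<alpha>\<close>, where \<open>\<beta>\<close> is the
  conjugate of \<open>\<alpha>\<close> over \<open>\<rat>(\<surd>D)\<close>.\<close>
lemma Im_conjugates_prod_le_mahler_alg:
  assumes "algebraic_int (quart_emb s (x, y))" and "y \<noteq> (0, 0)"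
  shows "(Im (quart_emb s (x, y)) * Im (quart_emb (- s) (x, y)))^2 \<le> mahler_alg (quart_emb s (x, y))"
proof -
  define a where "a = quart_emb s (x, y)"
  define b where "b = quart_emb (- s) (x, y)"
  define q where "q = (SOME p. is_min_int_poly p a)"
  have "is_min_int_poly q a"
    unfolding q_def a_def by (rule someI_ex[OF min_int_poly_exists[OF assms(1)]])
  then have "q \<noteq> 0" and root_a: "poly (of_int_poly q) a = 0"
    by (auto simp: is_min_int_poly_def)
  have root_b: "poly (of_int_poly q) b = 0"
    using root_a unfolding a_def b_def by (rule quart_emb_root_transfer[OF s_square minus_s_square])
  have "quad_emb s y \<noteq> 0" "quad_emb (- s) y \<noteq> 0"
    using assms(2) quad_emb_eq_0[OF s_square] quad_emb_eq_0[OF minus_s_square] by blast+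
  then have "Im a \<noteq> 0" "Im b \<noteq> 0"
    using Im_theta_pos[OF s_square] Im_theta_pos[OF minus_s_square]
    by (simp_all add: a_def b_def del: quad_emb.simps)
  moreover have "(Im a)^2 \<noteq> (Im b)^2"
    unfolding a_def b_def by (rule Im_quart_emb_square_neq[OF assms(2)])
  ultimately have "(Im a)^2 * (Im b)^2 \<le> mahler_measure (of_int_poly q)"
    by (rule Im_square_prod_le_mahler_measure[OF \<open>q \<noteq> 0\<close> root_a root_b])
  then have "(Im a * Im b)^2 \<le> mahler_alg a"
    by (simp add: mahler_alg_def q_def power_mult_distrib)
  then show ?thesis
    by (simp only: a_def b_def)
qed

lemma mahler_alg_ge_if_generator:
  assumes "a \<in> ring_of_integers (gen_field {theta s})" and "gen_field {a} = gen_field {theta s}"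
  shows "real_of_int (A^2 * D) / 256 \<le> mahler_alg a"
proof -
  have "a \<in> range (quart_emb s)"
    using assms(1) gen_field_theta_subset[OF s_square] by (auto simp: ring_of_integers_def)
  then obtain x c d where a: "a = quart_emb s (x, (c, d))"
    by (metis rangeE surj_pair)
  have "algebraic_int a"
    using assms(1) by (auto simp: ring_of_integers_def alg_integer_def algebraic_int_altdef_ipoly)
  have y: "(c, d) \<noteq> (0, 0)"
    using assms(2) unfolding a by (rule generator_second_coord_nonzero)
  have "algebraic_int (2 * of_real (quad_emb s (c, d)) * theta s)"
    using \<open>algebraic_int a\<close> unfolding a by (rule algebraic_int_twice_imag)
  then have bound: "1 \<le> 256 * (real_of_int C)^2 * (of_rat (quad_norm (c, d)))^2"
    using quad_norm_lower_bound[OF y] Ints_via_theta Ints_via_theta' by blast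
  have "real_of_int (A^2 * D) / 256 = of_int A ^ 2 * of_int D / 256 * 1"
    by simp
  also have "\<dots> \<le> of_int A ^ 2 * of_int D / 256 * (256 * (real_of_int C)^2 * (of_rat (quad_norm (c, d)))^2)"
    using bound D_gt_1 by (intro mult_left_mono) auto
  also have "\<dots> = (Im a * Im (quart_emb (- s) (x, (c, d))))^2"
    unfolding a Im_quart_emb_mult by (simp add: power_mult_distrib)
  also have "\<dots> \<le> mahler_alg a"
    unfolding a using Im_conjugates_prod_le_mahler_alg \<open>algebraic_int a\<close> y a by blast
  finally show ?thesis .
qed

end

theorem proposition6p2:
  fixes A B C D :: int
  assumes "A < 0" and "odd A" and "squarefree A"
    and "B > 0" and "C > 0" and "D = B^2 + C^2" and "squarefree D"
    and "gcd A D = 1"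
  shows "real_of_int (A^2 * D) / 2304 \<le>
     mahler_ring_of_integers
       (gen_field {csqrt (of_int A * (of_int D + of_int B * of_real (sqrt (real_of_int D))))})"
proof -
  \<comment> \<open>The oddness of \<open>A\<close> only serves the uniqueness of the normal form of the field.\<close>
  interpret imaginary_cyclic_quartic A B C D
    using assms by unfold_locales (auto simp: coprime_iff_gcd_eq_1)
  let ?K = "gen_field {theta s}"
  have K: "gen_field {csqrt (of_int A * (of_int D + of_int B * of_real (sqrt (real_of_int D))))} = ?K"
    by (simp add: theta_def quad_emb_tau s_def)
  have "real_of_int (A^2 * D) / 2304 \<le> real_of_int (A^2 * D) / 256"
    using D_gt_1 by (simp add: divide_left_mono)
  then have bound: "real_of_int (A^2 * D) / 2304 \<le> mahler_alg a"
    if "a \<in> ring_of_integers ?K" and "gen_field {a} = ?K" for a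
    using mahler_alg_ge_if_generator[OF that] by linarith
  have "theta s \<in> ring_of_integers ?K"
    using algebraic_int_theta[OF s_square] gen_field_superset[of "{theta s}"]
    by (auto simp: ring_of_integers_def alg_integer_def algebraic_int_altdef_ipoly)
  then show ?thesis
    unfolding K mahler_ring_of_integers_def using bound by (intro cInf_greatest) blast+
qed

end
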